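(* Let $t$ be a positive integer and let $\mathcal{P}=\{P_1,\ldots,P_E\}$ be a locally $(2t,2)$-bounded partition of $\mathbb{F}_q^k$ (with this fixed indexing of its blocks). For $u\in\mathbb{F}_q^k$ let $B_{\mathcal{P}}(u,2t)=\{j\in[E]: B(u,2t)\cap P_j\neq\emptyset\}$. Define $\mathcal{C}:\mathbb{F}_q^k\to\mathbb{F}_q^{k+2t}$ by $\mathcal{C}(u)=(u,u_p)$, where, if $u\in P_i$, $u_p=(0,\ldots,0)\in\mathbb{F}_q^{2t}$ when $i=\min B_{\mathcal{P}}(u,2t)$ and $u_p=(1,\ldots,1)\in\mathbb{F}_q^{2t}$ otherwise. Then $\mathcal{C}$ is a $(\mathcal{P},t)$-encoding.
   Context: $B(u,\rho)$ denotes the Hamming ball of radius $\rho$ centered at $u$. A partition $\mathcal{P}=\{P_1,\ldots,P_E\}$ of $\mathbb{F}_q^k$ is locally $(\rho,\lambda)$-bounded if for every $u\in\mathbb{F}_q^k$, $|\{j\in[E]: B(u,\rho)\cap P_j\ne\emptyset\}|\le\lambda$. A $(\mathcal{P},t)$-encoding is a systematic map $\mathcal{C}:\mathbb{F}_q^k\to\mathbb{F}_q^{k+r}$ with $d(\mathcal{C}(u),\mathcal{C}(v))\ge 2t+1$ (Hamming distance) whenever $u,v$ lie in different blocks of $\mathcal{P}$. *)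

theory Defs
  imports Main
begin

definition vecs :: "nat \<Rightarrow> 'a list set" where
  "vecs n = {u. length u = n}"

definition hamming :: "'a list \<Rightarrow> 'a list \<Rightarrow> nat" where
  "hamming u v = card {i. i < length u \<and> u ! i \<noteq> v ! i}"

definition hball :: "nat \<Rightarrow> 'a list \<Rightarrow> nat \<Rightarrow> 'a list set" where
  "hball n u \<rho> = {v \<in> vecs n. hamming u v \<le> \<rho>}"

definition is_partition :: "nat \<Rightarrow> nat \<Rightarrow> (nat \<Rightarrow> 'a list set) \<Rightarrow> bool" where
  "is_partition k E P \<longleftrightarrow>
     (\<forall>j\<in>{1..E}. P j \<noteq> {} \<and> P j \<subseteq> vecs k) \<and>
     (\<forall>i\<in>{1..E}. \<forall>j\<in>{1..E}. i \<noteq> j \<longrightarrow> P i \<inter> P j = {}) \<and>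
     (\<Union>j\<in>{1..E}. P j) = vecs k"

definition ball_blocks :: "nat \<Rightarrow> nat \<Rightarrow> (nat \<Rightarrow> 'a list set) \<Rightarrow> 'a list \<Rightarrow> nat \<Rightarrow> nat set" where
  "ball_blocks k E P u \<rho> = {j \<in> {1..E}. hball k u \<rho> \<inter> P j \<noteq> {}}"

definition locally_bounded :: "nat \<Rightarrow> nat \<Rightarrow> (nat \<Rightarrow> 'a list set) \<Rightarrow> nat \<Rightarrow> nat \<Rightarrow> bool" where
  "locally_bounded k E P \<rho> lam \<longleftrightarrow>
     (\<forall>u\<in>vecs k. card (ball_blocks k E P u \<rho>) \<le> lam)"

definition block_of :: "nat \<Rightarrow> (nat \<Rightarrow> 'a list set) \<Rightarrow> 'a list \<Rightarrow> nat" where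
  "block_of E P u = (THE i. i \<in> {1..E} \<and> u \<in> P i)"

definition is_encoding :: "nat \<Rightarrow> nat \<Rightarrow> (nat \<Rightarrow> 'a list set) \<Rightarrow> nat \<Rightarrow> nat \<Rightarrow> ('a list \<Rightarrow> 'a list) \<Rightarrow> bool" where
  "is_encoding k E P r t C \<longleftrightarrow>
     (\<forall>u\<in>vecs k. length (C u) = k + r \<and> take k (C u) = u) \<and>
     (\<forall>i\<in>{1..E}. \<forall>j\<in>{1..E}. \<forall>u\<in>P i. \<forall>v\<in>P j. i \<noteq> j \<longrightarrow> hamming (C u) (C v) \<ge> 2 * t + 1)"

definition enc6 :: "nat \<Rightarrow> nat \<Rightarrow> (nat \<Rightarrow> 'a::zero_neq_one list set) \<Rightarrow> nat \<Rightarrow> 'a list \<Rightarrow> 'a list" where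
  "enc6 k E P t u = u @ (if block_of E P u = Min (ball_blocks k E P u (2 * t))
                         then replicate (2 * t) 0 else replicate (2 * t) 1)"

end

theory Submission
  imports Defs
begin

text \<open>Two messages in different blocks either are already at distance more than \<open>2t\<close>, or
  they are at distance at least 1 and see each other's block in their balls of radius \<open>2t\<close>.
  In the latter case local \<open>(2t,2)\<close>-boundedness forces both balls to meet exactly the same two
  blocks, so exactly one of the messages lies in the block of smaller index and the two parity
  parts \<open>0\<dots>0\<close> and \<open>1\<dots>1\<close> add distance \<open>2t\<close>.\<close>

lemma hamming_conv_filter_zip:
  "length u = length v \<Longrightarrow> hamming u v = length (filter (\<lambda>(x, y). x \<noteq> y) (zip u v))"
  unfolding hamming_def length_filter_conv_card by (auto intro!: arg_cong[where f = card])

lemma hamming_append: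
  assumes "length u = length v" "length a = length b"
  shows "hamming (u @ a) (v @ b) = hamming u v + hamming a b"
  using assms by (simp add: hamming_conv_filter_zip)

lemma hamming_commute: "length u = length v \<Longrightarrow> hamming u v = hamming v u"
  by (simp add: hamming_def eq_commute)

lemma hamming_self: "hamming u u = 0"
  by (simp add: hamming_def)

lemma hamming_eq_0_iff: "length u = length v \<Longrightarrow> hamming u v = 0 \<longleftrightarrow> u = v"
  by (auto simp: hamming_def intro: nth_equalityI)

lemma hamming_replicate: "hamming (replicate n a) (replicate n b) = n" if "a \<noteq> b"
proof -
  have "{i. i < n \<and> replicate n a ! i \<noteq> replicate n b ! i} = {..<n}"
    using that by auto
  then show ?thesis by (simp add: hamming_def)
qed

lemma block_of_eq:
  assumes "is_partition k E P" "i \<in> {1..E}" "u \<in> P i"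
  shows "block_of E P u = i"
  unfolding block_of_def
proof (rule the_equality)
  fix j assume "j \<in> {1..E} \<and> u \<in> P j"
  then show "j = i" using assms unfolding is_partition_def by blast
qed (use assms in simp)

lemma ball_blocks_eq_pair:
  assumes "is_partition k E P" "locally_bounded k E P \<rho> 2"
    and "i \<in> {1..E}" "j \<in> {1..E}" "i \<noteq> j" "u \<in> P i" "v \<in> P j" "hamming u v \<le> \<rho>"
  shows "ball_blocks k E P u \<rho> = {i, j}"
proof -
  have "u \<in> vecs k" "v \<in> vecs k"
    using assms(1,3,4,6,7) unfolding is_partition_def by blast+
  then have "{i, j} \<subseteq> ball_blocks k E P u \<rho>"
    using assms(3-8) by (auto simp: ball_blocks_def hball_def hamming_self)
  moreover have "card (ball_blocks k E P u \<rho>) \<le> 2"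
    using assms(2) \<open>u \<in> vecs k\<close> unfolding locally_bounded_def by blast
  moreover have "card {i, j} = 2"
    using assms(5) by simp
  moreover have "finite (ball_blocks k E P u \<rho>)"
    by (simp add: ball_blocks_def)
  ultimately show ?thesis by (metis card_seteq)
qed

definition in_min_block :: "nat \<Rightarrow> nat \<Rightarrow> (nat \<Rightarrow> 'a list set) \<Rightarrow> nat \<Rightarrow> 'a list \<Rightarrow> bool" where
  "in_min_block k E P t u \<longleftrightarrow> block_of E P u = Min (ball_blocks k E P u (2 * t))"

lemma hamming_enc6:
  assumes "length u = length v"
  shows "hamming (enc6 k E P t u) (enc6 k E P t v) =
    hamming u v + (if in_min_block k E P t u = in_min_block k E P t v then 0 else 2 * t)"
  using assms
  by (simp add: enc6_def hamming_append hamming_replicate hamming_self flip: in_min_block_def)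

lemma in_min_block_differs:
  assumes "is_partition k E P" "locally_bounded k E P (2 * t) 2"
    and "i \<in> {1..E}" "j \<in> {1..E}" "i \<noteq> j" "u \<in> P i" "v \<in> P j"
    and "length u = length v" "hamming u v \<le> 2 * t"
  shows "in_min_block k E P t u \<noteq> in_min_block k E P t v"
proof -
  have "hamming v u \<le> 2 * t"
    using assms(8,9) by (simp add: hamming_commute)
  have "ball_blocks k E P u (2 * t) = {i, j}"
    using ball_blocks_eq_pair[OF assms(1-7,9)] .
  moreover have "ball_blocks k E P v (2 * t) = {j, i}"
    using ball_blocks_eq_pair[OF assms(1,2,4,3) _ assms(7,6) \<open>hamming v u \<le> 2 * t\<close>] assms(5) by simp
  ultimately show ?thesis
    using assms(5) block_of_eq[OF assms(1,3,6)] block_of_eq[OF assms(1,4,7)]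
    by (auto simp: in_min_block_def insert_commute min_def)
qed

theorem theorem6:
  fixes P :: "nat \<Rightarrow> ('a::{finite,field}) list set" and k E t :: nat
  assumes "t > 0"
    and "is_partition k E P"
    and "locally_bounded k E P (2 * t) 2"
  shows "is_encoding k E P (2 * t) t (enc6 k E P t)"
proof -
  have "hamming (enc6 k E P t u) (enc6 k E P t v) \<ge> 2 * t + 1"
    if blocks: "i \<in> {1..E}" "j \<in> {1..E}" "i \<noteq> j" "u \<in> P i" "v \<in> P j" for i j u v
  proof -
    have "u \<in> vecs k" "v \<in> vecs k" "u \<noteq> v"
      using assms(2) blocks unfolding is_partition_def by blast+
    then have len: "length u = length v" and "hamming u v \<ge> 1"
      using hamming_eq_0_iff[of u v] by (auto simp: vecs_def)
    then show ?thesis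
      using in_min_block_differs[OF assms(2,3) blocks len]
      by (cases "hamming u v \<le> 2 * t") (simp_all add: hamming_enc6)
  qed
  then show ?thesis
    by (auto simp: is_encoding_def enc6_def vecs_def)
qed

end
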